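(* Let $L_f>8\alpha>0$ and $\epsilon>0$ be given. There exists an infinite-dimensional smooth problem of the form described in the context with aggregate smoothness constant $L_f$ and with $u$ having strong convexity modulus $\alpha$, such that any DPM algorithm requires at least $\Omega(\sqrt{L_f/\alpha}\log(1/\epsilon))$ communication rounds to find an $\epsilon$-close solution, i.e. a point $x$ with $\|x-x^*\|^2\le\epsilon$ (the dependence on $R_0\ge\|x^0-x^*\|$ inside the logarithm being ignored).
   Context: Problem form: $\min_{x\in X}\{f(x):=\max_{p\in P}\sum_{i=1}^mp_if_i(x)-\rho^*(p)+u(x)\}$ with $X$ a closed convex subset of the (possibly infinite-dimensional) Euclidean space of variables, $P\subseteq\{p\in\mathbb{R}^m:\sum_ip_i=1,p\ge0\}$ closed convex, $\rho^*$, $u$ proper closed convex, and $f_i(x)=\max_{\pi_i\in\Pi_i}\langle A_ix,\pi_i\rangle-f_i^*(\pi_i)$; smooth means $A_i=I$, $f_i$ convex with Lipschitz gradient and $f_i^*$ its conjugate. $x^*$ is the optimal solution. The aggregate smoothness constant is $\max_{p\in P}L_p$, where $L_p$ is the Lipschitz constant of $\nabla\sum_ip_if_i$. $x^0=0$. A DPM algorithm on a star network (server plus workers, worker $i$ knowing only $f_i$, server knowing $u$, $\rho^*$, $P$) maintains a server memory and, for each worker, primal and dual memories, all $\{0\}$ initially. In each communication round each worker sends one vector from the span of its primal memory to the server and receives one vector from the span of the server memory; between rounds each worker may, any finite number of times, pick $\bar x$ in the span of its primal memory, $\bar\pi_i$ in the span of its dual memory, $\tau\ge0$, compute $\pi_i'\in\arg\max_{\pi_i\in\Pi_i}\langle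 A_i\bar x,\pi_i\rangle-f_i^*(\pi_i)-\frac\tau2\|\pi_i-\bar\pi_i\|^2$, add $A_i^\top\pi_i',A_i^\top\bar\pi_i$ to its primal memory and $\pi_i',A_i\bar x$ to its dual memory; the server may, any finite number of times, add $\arg\min_{x\in X}u(x)+\frac\eta2\|x-\bar x\|^2$ for $\bar x$ in the span of its memory and $\eta>0$. The output after $t$ rounds lies in the span of all primal memories and the server memory. $\Omega$ hides absolute constants. *)

theory Defs
  imports "HOL-Analysis.Analysis"
begin

typedef l2 = "{x::nat \<Rightarrow> real. summable (\<lambda>i. (x i)\<^sup>2)}" morphisms l2_seq Abs_l2
  by (rule exI[of _ "\<lambda>_. 0"]) simp

setup_lifting type_definition_l2

lemma l2_abs_mult_le: "\<bar>a*b\<bar> \<le> a\<^sup>2 + (b::real)\<^sup>2"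
proof -
  have "0 \<le> (\<bar>a\<bar> - \<bar>b\<bar>)\<^sup>2" by simp
  hence h: "2*(\<bar>a\<bar>*\<bar>b\<bar>) \<le> a\<^sup>2 + b\<^sup>2" by (simp add: power2_eq_square algebra_simps)
  have h2: "0 \<le> \<bar>a\<bar>*\<bar>b\<bar>" by simp
  have "\<bar>a*b\<bar> = \<bar>a\<bar>*\<bar>b\<bar>" by (simp add: abs_mult)
  with h h2 show ?thesis by linarith
qed
lemma l2_sq_add_le: "(a+b)\<^sup>2 \<le> 2*a\<^sup>2 + 2*(b::real)\<^sup>2"
proof -
  have "0 \<le> (a - b)\<^sup>2" by simp
  thus ?thesis by (simp add: power2_eq_square algebra_simps)
qed

lemma l2_add_summable:
  assumes "summable (\<lambda>i. (x i)\<^sup>2)" "summable (\<lambda>i. (y i)\<^sup>2::real)"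
  shows "summable (\<lambda>i. (x i + y i)\<^sup>2)"
proof (rule summable_comparison_test'[where g="\<lambda>i. 2*(x i)\<^sup>2 + 2*(y i)\<^sup>2"])
  show "summable (\<lambda>i. 2*(x i)\<^sup>2 + 2*(y i)\<^sup>2)"
    using assms by (intro summable_add summable_mult) auto
  fix n show "norm ((x n + y n)\<^sup>2) \<le> 2*(x n)\<^sup>2 + 2*(y n)\<^sup>2"
    using l2_sq_add_le by simp
qed

lemma l2_prod_summable:
  assumes "summable (\<lambda>i. (x i)\<^sup>2)" "summable (\<lambda>i. (y i)\<^sup>2::real)"
  shows "summable (\<lambda>i. x i * y i)"
proof (rule summable_comparison_test'[where g="\<lambda>i. (x i)\<^sup>2 + (y i)\<^sup>2"])
  show "summable (\<lambda>i. (x i)\<^sup>2 + (y i)\<^sup>2)"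
    using assms by (intro summable_add) auto
  fix n show "norm (x n * y n) \<le> (x n)\<^sup>2 + (y n)\<^sup>2"
    using l2_abs_mult_le by simp
qed

instantiation l2 :: real_inner
begin
lift_definition zero_l2 :: l2 is "\<lambda>_. 0" by simp
lift_definition plus_l2 :: "l2 \<Rightarrow> l2 \<Rightarrow> l2" is "\<lambda>x y i. x i + y i" by (rule l2_add_summable)
lift_definition uminus_l2 :: "l2 \<Rightarrow> l2" is "\<lambda>x i. - x i" by simp
lift_definition minus_l2 :: "l2 \<Rightarrow> l2 \<Rightarrow> l2" is "\<lambda>x y i. x i - y i"
  using l2_add_summable[of _ "\<lambda>i. - _ i"] by simp
lift_definition scaleR_l2 :: "real \<Rightarrow> l2 \<Rightarrow> l2" is "\<lambda>c x i. c * x i"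
  by (simp add: power_mult_distrib summable_mult)
lift_definition inner_l2 :: "l2 \<Rightarrow> l2 \<Rightarrow> real" is "\<lambda>x y. \<Sum>i. x i * y i" .
definition norm_l2 :: "l2 \<Rightarrow> real" where "norm_l2 x = sqrt (inner x x)"
definition sgn_l2 :: "l2 \<Rightarrow> l2" where "sgn_l2 x = scaleR (inverse (norm x)) x"
definition dist_l2 :: "l2 \<Rightarrow> l2 \<Rightarrow> real" where "dist_l2 x y = norm (x - y)"
definition uniformity_l2 :: "(l2 \<times> l2) filter" where
  "uniformity_l2 = (INF e\<in>{0 <..}. principal {(x, y). dist x y < e})"
definition open_l2 :: "l2 set \<Rightarrow> bool" where
  "open_l2 U \<longleftrightarrow> (\<forall>x\<in>U. eventually (\<lambda>(x', y). x' = x \<longrightarrow> y \<in> U) uniformity)"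
instance
proof
  fix x y z :: l2 and a b :: real and U :: "l2 set"
  show "x + y + z = x + (y + z)" by transfer (simp add: algebra_simps)
  show "x + y = y + x" by transfer (simp add: algebra_simps)
  show "0 + x = x" by transfer simp
  show "- x + x = 0" by transfer simp
  show "x - y = x + - y" by transfer simp
  show "a *\<^sub>R (x + y) = a *\<^sub>R x + a *\<^sub>R y" by transfer (simp add: algebra_simps)
  show "(a + b) *\<^sub>R x = a *\<^sub>R x + b *\<^sub>R x" by transfer (simp add: algebra_simps)
  show "a *\<^sub>R b *\<^sub>R x = (a * b) *\<^sub>R x" by transfer (simp add: algebra_simps)
  show "1 *\<^sub>R x = x" by transfer simp
  show "sgn x = scaleR (inverse (norm x)) x" by (simp add: sgn_l2_def)
  show "dist x y = norm (x - y)" by (simp add: dist_l2_def)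
  show "(uniformity :: (l2 \<times> l2) filter) = (INF e\<in>{0 <..}. principal {(x, y). dist x y < (e::real)})"
    by (rule uniformity_l2_def)
  show "open U \<longleftrightarrow> (\<forall>x\<in>U. eventually (\<lambda>(x', y). x' = x \<longrightarrow> y \<in> U) uniformity)"
    by (simp add: open_l2_def)
  show "inner x y = inner y x" by transfer (simp add: mult.commute)
  show "inner (x + y) z = inner x z + inner y z"
    by transfer (simp add: distrib_right suminf_add l2_prod_summable)
  show "inner (a *\<^sub>R x) y = a * inner x y"
    by transfer (simp add: mult.assoc suminf_mult l2_prod_summable)
  show "0 \<le> inner x x" by transfer (simp add: suminf_nonneg power2_eq_square[symmetric])
  show "inner x x = 0 \<longleftrightarrow> x = 0"
    by transfer (auto simp: suminf_eq_zero_iff fun_eq_iff power2_eq_square[symmetric])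
  show "norm x = sqrt (inner x x)" by (simp add: norm_l2_def)
qed
end


definition conj_dom :: "('v::real_inner \<Rightarrow> real) \<Rightarrow> 'v set" where
  "conj_dom g = {\<pi>. bdd_above (range (\<lambda>x. inner x \<pi> - g x))}"

definition conj_fun :: "('v::real_inner \<Rightarrow> real) \<Rightarrow> 'v \<Rightarrow> real" where
  "conj_fun g \<pi> = (SUP x. inner x \<pi> - g x)"

definition is_gradient :: "('v::real_inner \<Rightarrow> real) \<Rightarrow> ('v \<Rightarrow> 'v) \<Rightarrow> bool" where
  "is_gradient g G \<longleftrightarrow> (\<forall>x. (g has_derivative (\<lambda>h. inner (G x) h)) (at x))"

definition smooth_convex :: "('v::real_inner \<Rightarrow> real) \<Rightarrow> bool" where
  "smooth_convex g \<longleftrightarrow> convex_on UNIV g \<and>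
     (\<exists>G L. is_gradient g G \<and> L-lipschitz_on UNIV G)"

definition grad_lip_const :: "('v::real_inner \<Rightarrow> real) \<Rightarrow> real" where
  "grad_lip_const g = Inf {L. \<exists>G. is_gradient g G \<and> L-lipschitz_on UNIV G}"

text \<open>Aggregate smoothness constant max_{p in P} L_p, L_p the Lipschitz constant of
  the gradient of sum_i p_i f_i.\<close>
definition aggregate_smoothness :: "nat \<Rightarrow> (nat \<Rightarrow> 'v::real_inner \<Rightarrow> real) \<Rightarrow> l2 set \<Rightarrow> real \<Rightarrow> bool" where
  "aggregate_smoothness m f P Lf \<longleftrightarrow>
     (\<forall>p\<in>P. grad_lip_const (\<lambda>x. \<Sum>i<m. l2_seq p i * f i x) \<le> Lf) \<and>
     (\<exists>p\<in>P. grad_lip_const (\<lambda>x. \<Sum>i<m. l2_seq p i * f i x) = Lf)"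

definition strongly_convex_on :: "'v::real_inner set \<Rightarrow> real \<Rightarrow> ('v \<Rightarrow> real) \<Rightarrow> bool" where
  "strongly_convex_on X a u \<longleftrightarrow> convex_on X (\<lambda>x. u x - a / 2 * (norm x)\<^sup>2)"

definition strong_convexity_modulus :: "'v::real_inner set \<Rightarrow> ('v \<Rightarrow> real) \<Rightarrow> real \<Rightarrow> bool" where
  "strong_convexity_modulus X u a \<longleftrightarrow>
     strongly_convex_on X a u \<and> (\<forall>b>a. \<not> strongly_convex_on X b u)"

definition closed_fun_on :: "'a::topological_space set \<Rightarrow> ('a \<Rightarrow> real) \<Rightarrow> bool" where
  "closed_fun_on C g \<longleftrightarrow> closed {(x, y). x \<in> C \<and> g x \<le> y}"

text \<open>P is a closed convex subset of the probability simplex of R^m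
  (vectors of R^m are represented as elements of l2 vanishing from index m on, so that
  R^m carries its usual Euclidean structure).\<close>
definition simplex_subset :: "nat \<Rightarrow> l2 set \<Rightarrow> bool" where
  "simplex_subset m P \<longleftrightarrow> P \<noteq> {} \<and> closed P \<and> convex P \<and>
     (\<forall>p\<in>P. (\<forall>i<m. 0 \<le> l2_seq p i) \<and> (\<forall>i\<ge>m. l2_seq p i = 0) \<and> (\<Sum>i<m. l2_seq p i) = 1)"

text \<open>Objective f(x) = max_{p in P} sum_i p_i f_i(x) - rho^*(p) + u(x).\<close>
definition objective :: "nat \<Rightarrow> (nat \<Rightarrow> 'v \<Rightarrow> real) \<Rightarrow> l2 set \<Rightarrow> (l2 \<Rightarrow> real)
    \<Rightarrow> ('v \<Rightarrow> real) \<Rightarrow> 'v \<Rightarrow> real" where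
  "objective m f P rho u x = (SUP p\<in>P. (\<Sum>i<m. l2_seq p i * f i x) - rho p) + u x"

text \<open>Smooth problem instance of the form in the context (A_i = I, Pi_i = dom f_i^*).\<close>
definition smooth_instance :: "nat \<Rightarrow> (nat \<Rightarrow> 'v::real_inner \<Rightarrow> real) \<Rightarrow> l2 set
    \<Rightarrow> (l2 \<Rightarrow> real) \<Rightarrow> ('v \<Rightarrow> real) \<Rightarrow> 'v set \<Rightarrow> bool" where
  "smooth_instance m f P rho u X \<longleftrightarrow>
     1 \<le> m \<and> X \<noteq> {} \<and> closed X \<and> convex X \<and>
     simplex_subset m P \<and> convex_on P rho \<and> closed_fun_on P rho \<and>
     convex_on X u \<and> closed_fun_on X u \<and>
     (\<forall>i<m. smooth_convex (f i))"

definition is_optimal :: "nat \<Rightarrow> (nat \<Rightarrow> 'v \<Rightarrow> real) \<Rightarrow> l2 set \<Rightarrow> (l2 \<Rightarrow> real)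
    \<Rightarrow> ('v \<Rightarrow> real) \<Rightarrow> 'v set \<Rightarrow> 'v \<Rightarrow> bool" where
  "is_optimal m f P rho u X xs \<longleftrightarrow>
     xs \<in> X \<and> (\<forall>x\<in>X. objective m f P rho u xs \<le> objective m f P rho u x)"

text \<open>State: server memory, and for each worker i its (primal memory, dual memory).\<close>
type_synonym ('v, 'w) dpm_state = "'v set \<times> (nat \<Rightarrow> 'v set \<times> 'w set)"

definition dpm_init :: "('v::real_vector, 'w::real_vector) dpm_state" where
  "dpm_init = ({0}, \<lambda>i. ({0}, {0}))"

definition worker_step :: "('v::real_inner \<Rightarrow> 'w::real_inner) \<Rightarrow> ('w \<Rightarrow> 'v) \<Rightarrow> 'w set \<Rightarrow> ('w \<Rightarrow> real)
    \<Rightarrow> 'v set \<times> 'w set \<Rightarrow> 'v set \<times> 'w set \<Rightarrow> bool" where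
  "worker_step A At Pis fs M M' \<longleftrightarrow>
     (\<exists>xb pb \<tau> p'. xb \<in> span (fst M) \<and> pb \<in> span (snd M) \<and> 0 \<le> \<tau> \<and> p' \<in> Pis \<and>
        (\<forall>p\<in>Pis. inner (A xb) p - fs p - \<tau> / 2 * (norm (p - pb))\<^sup>2
                 \<le> inner (A xb) p' - fs p' - \<tau> / 2 * (norm (p' - pb))\<^sup>2) \<and>
        M' = (fst M \<union> {At p', At pb}, snd M \<union> {p', A xb}))"

definition server_step :: "'v::real_inner set \<Rightarrow> ('v \<Rightarrow> real) \<Rightarrow> 'v set \<Rightarrow> 'v set \<Rightarrow> bool" where
  "server_step X u S S' \<longleftrightarrow>
     (\<exists>xb \<eta> z. xb \<in> span S \<and> 0 < \<eta> \<and> z \<in> X \<and>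
        (\<forall>x\<in>X. u z + \<eta> / 2 * (norm (z - xb))\<^sup>2 \<le> u x + \<eta> / 2 * (norm (x - xb))\<^sup>2) \<and>
        S' = S \<union> {z})"

definition local_step :: "nat \<Rightarrow> (nat \<Rightarrow> 'v::real_inner \<Rightarrow> 'w::real_inner) \<Rightarrow> (nat \<Rightarrow> 'w \<Rightarrow> 'v)
    \<Rightarrow> (nat \<Rightarrow> 'w set) \<Rightarrow> (nat \<Rightarrow> 'w \<Rightarrow> real) \<Rightarrow> 'v set \<Rightarrow> ('v \<Rightarrow> real)
    \<Rightarrow> ('v, 'w) dpm_state \<Rightarrow> ('v, 'w) dpm_state \<Rightarrow> bool" where
  "local_step m A At Pis fs X u s s' \<longleftrightarrow>
     (\<exists>i<m. fst s' = fst s \<and> worker_step (A i) (At i) (Pis i) (fs i) (snd s i) (snd s' i) \<and>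
            (\<forall>j. j \<noteq> i \<longrightarrow> snd s' j = snd s j)) \<or>
     (server_step X u (fst s) (fst s') \<and> snd s' = snd s)"

definition comm_round :: "nat \<Rightarrow> ('v::real_vector, 'w) dpm_state \<Rightarrow> ('v, 'w) dpm_state \<Rightarrow> bool" where
  "comm_round m s s' \<longleftrightarrow>
     (\<exists>v w. (\<forall>i<m. v i \<in> span (fst (snd s i))) \<and>
            fst s' = fst s \<union> v ` {..<m} \<and>
            (\<forall>i<m. w i \<in> span (fst s')) \<and>
            snd s' = (\<lambda>i. if i < m then (fst (snd s i) \<union> {w i}, snd (snd s i)) else snd s i))"

inductive dpm_reach :: "nat \<Rightarrow> (nat \<Rightarrow> 'v::real_inner \<Rightarrow> 'w::real_inner) \<Rightarrow> (nat \<Rightarrow> 'w \<Rightarrow> 'v)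
    \<Rightarrow> (nat \<Rightarrow> 'w set) \<Rightarrow> (nat \<Rightarrow> 'w \<Rightarrow> real) \<Rightarrow> 'v set \<Rightarrow> ('v \<Rightarrow> real)
    \<Rightarrow> nat \<Rightarrow> ('v, 'w) dpm_state \<Rightarrow> bool"
  for m A At Pis fs X u where
  init: "(local_step m A At Pis fs X u)\<^sup>*\<^sup>* dpm_init s \<Longrightarrow> dpm_reach m A At Pis fs X u 0 s"
| round: "dpm_reach m A At Pis fs X u t s \<Longrightarrow> comm_round m s s1 \<Longrightarrow>
          (local_step m A At Pis fs X u)\<^sup>*\<^sup>* s1 s2 \<Longrightarrow> dpm_reach m A At Pis fs X u (Suc t) s2"

definition dpm_outputs :: "nat \<Rightarrow> ('v::real_vector, 'w) dpm_state \<Rightarrow> 'v set" where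
  "dpm_outputs m s = span (fst s \<union> (\<Union>i<m. fst (snd s i)))"

definition smooth_dpm_reach :: "nat \<Rightarrow> (nat \<Rightarrow> 'v::real_inner \<Rightarrow> real) \<Rightarrow> 'v set \<Rightarrow> ('v \<Rightarrow> real)
    \<Rightarrow> nat \<Rightarrow> ('v, 'v) dpm_state \<Rightarrow> bool" where
  "smooth_dpm_reach m f X u =
     dpm_reach m (\<lambda>i. id) (\<lambda>i. id) (\<lambda>i. conj_dom (f i)) (\<lambda>i. conj_fun (f i)) X u"

end

theory Submission
  imports Defs
begin

text \<open>
  The instance splits Nesterov's chain x_0 - x_1, x_1 - x_2, ... between the two parties.
  Writing (D_s x)_j = x_(2j+s) - x_(2j+s+1), the single worker holds
  f = c/2 |D_1 x|^2 - b x_0, made of the links (2j+1, 2j+2), and the server holds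
  u = alpha/2 |x|^2 + c/2 |D_0 x|^2, made of the links (2j, 2j+1). Truncating a vector after an
  even index changes f only by a nonnegative term at most quadratic in the cut-off tail, and
  truncating after an odd index does not increase u. Hence every
  conjugate-proximal step of the worker stays in the span of the first 2t+1 unit vectors,
  every proximal step of the server in that of the first 2t+2, and a communication round
  extends both supports by only two coordinates. The minimiser is geometric,
  x*_i = q^(i-2) with (1-q)^2 = (alpha/c) q, so after t rounds the squared error is at least
  q^(4t); since 1 - q is of order sqrt(alpha/c), this gives t >= 1/8 sqrt(L_f/alpha) ln(1/eps)
  for L_f = 2c.
\<close>

section \<open>Coordinates and truncation in l2\<close>

lemma l2_seq_summable_power2: "summable (\<lambda>i. (l2_seq x i)\<^sup>2)"
  using l2_seq[of x] by simp

lemma l2_eqI: "(\<And>i. l2_seq x i = l2_seq y i) \<Longrightarrow> x = y"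
  by (metis l2_seq_inject ext)

lemma l2_seq_Abs_l2: "summable (\<lambda>i. (g i)\<^sup>2) \<Longrightarrow> l2_seq (Abs_l2 g) = g"
  by (simp add: Abs_l2_inverse)

lemma l2_seq_simps [simp]:
  "l2_seq (x + y) i = l2_seq x i + l2_seq y i"
  "l2_seq (x - y) i = l2_seq x i - l2_seq y i"
  "l2_seq (- x) i = - l2_seq x i"
  "l2_seq (r *\<^sub>R x) i = r * l2_seq x i"
  "l2_seq 0 i = 0"
  by (simp_all add: plus_l2.rep_eq minus_l2.rep_eq uminus_l2.rep_eq scaleR_l2.rep_eq zero_l2.rep_eq)

lemma inner_l2_eq_suminf: "inner x y = (\<Sum>i. l2_seq x i * l2_seq y i)"
  by (simp add: inner_l2.rep_eq)

lemma summable_l2_seq_mult: "summable (\<lambda>i. l2_seq x i * l2_seq y i)"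
  by (rule l2_prod_summable[OF l2_seq_summable_power2 l2_seq_summable_power2])

lemma power2_norm_l2_eq_suminf: "(norm x)\<^sup>2 = (\<Sum>i. (l2_seq x i)\<^sup>2)"
  using power2_norm_eq_inner[of x] inner_l2_eq_suminf[of x x] by (simp add: power2_eq_square)

lemma l2_seq_power2_le_power2_norm: "(l2_seq x i)\<^sup>2 \<le> (norm x)\<^sup>2"
  unfolding power2_norm_l2_eq_suminf
  using sum_le_suminf[OF l2_seq_summable_power2[of x], of "{i}"] by simp

definition l2_unit :: "nat \<Rightarrow> l2" where
  "l2_unit j = Abs_l2 (\<lambda>i. if i = j then 1 else 0)"

lemma l2_seq_unit [simp]: "l2_seq (l2_unit j) i = (if i = j then 1 else 0)"
proof -
  have "summable (\<lambda>i. (if i = j then 1 else 0::real)\<^sup>2)"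
    by (rule summable_comparison_test'[where g="\<lambda>i. if i = j then 1 else 0"]) auto
  thus ?thesis unfolding l2_unit_def by (simp add: l2_seq_Abs_l2)
qed

lemma inner_l2_unit: "inner (l2_unit j) x = l2_seq x j"
proof -
  have "(\<Sum>i. l2_seq (l2_unit j) i * l2_seq x i) = (\<Sum>i. if i = j then l2_seq x j else 0)"
    by (rule arg_cong[where f=suminf]) auto
  also have "\<dots> = l2_seq x j" by (rule sums_unique[symmetric]) (rule sums_single)
  finally show ?thesis unfolding inner_l2_eq_suminf .
qed

definition l2_geom :: "real \<Rightarrow> real \<Rightarrow> l2" where
  "l2_geom R q = Abs_l2 (\<lambda>i. R * q ^ i)"

lemma l2_seq_geom:
  assumes "0 \<le> q" "q < 1"
  shows "l2_seq (l2_geom R q) i = R * q ^ i"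
proof -
  have "norm (q\<^sup>2) < 1" using assms by (simp add: power_less_one_iff)
  hence "summable (\<lambda>i. R\<^sup>2 * (q\<^sup>2) ^ i)" by (intro summable_mult summable_geometric)
  moreover have "(\<lambda>i. R\<^sup>2 * (q\<^sup>2) ^ i) = (\<lambda>i. (R * q ^ i)\<^sup>2)"
    by (simp add: fun_eq_iff power2_eq_square power_mult_distrib)
  ultimately have "summable (\<lambda>i. (R * q ^ i)\<^sup>2)" by simp
  thus ?thesis unfolding l2_geom_def by (simp add: l2_seq_Abs_l2)
qed

definition l2_trunc :: "nat \<Rightarrow> l2 \<Rightarrow> l2" where
  "l2_trunc k x = Abs_l2 (\<lambda>i. if i \<le> k then l2_seq x i else 0)"

lemma l2_seq_trunc [simp]: "l2_seq (l2_trunc k x) i = (if i \<le> k then l2_seq x i else 0)"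
proof -
  have "summable (\<lambda>i. (if i \<le> k then l2_seq x i else 0)\<^sup>2)"
    by (rule summable_comparison_test'[OF l2_seq_summable_power2[of x]]) auto
  thus ?thesis unfolding l2_trunc_def by (simp add: l2_seq_Abs_l2)
qed

lemma l2_trunc_simps [simp]:
  "l2_trunc k (x + y) = l2_trunc k x + l2_trunc k y"
  "l2_trunc k (x - y) = l2_trunc k x - l2_trunc k y"
  "l2_trunc k (r *\<^sub>R x) = r *\<^sub>R l2_trunc k x"
  "l2_trunc k (l2_trunc k x) = l2_trunc k x"
  by (rule l2_eqI; simp)+

definition l2_upto :: "nat \<Rightarrow> l2 set" where
  "l2_upto k = {x. \<forall>i>k. l2_seq x i = 0}"

lemma l2_upto_iff_trunc: "x \<in> l2_upto k \<longleftrightarrow> l2_trunc k x = x"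
  unfolding l2_upto_def by (auto intro!: l2_eqI) (metis l2_seq_trunc not_le)

lemma l2_trunc_in_upto: "l2_trunc k x \<in> l2_upto k"
  unfolding l2_upto_def by simp

lemma l2_upto_mono: "k \<le> k' \<Longrightarrow> l2_upto k \<subseteq> l2_upto k'"
  unfolding l2_upto_def by auto

lemma subspace_l2_upto: "subspace (l2_upto k)"
  unfolding subspace_def l2_upto_def by auto

lemma span_subset_l2_upto: "S \<subseteq> l2_upto k \<Longrightarrow> span S \<subseteq> l2_upto k"
  by (rule span_minimal[OF _ subspace_l2_upto])

lemma inner_l2_trunc_commute: "inner (l2_trunc k x) y = inner x (l2_trunc k y)"
  unfolding inner_l2_eq_suminf by (rule arg_cong[where f=suminf]) (auto simp: fun_eq_iff)

lemma inner_l2_upto_tail: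
  assumes "a \<in> l2_upto k"
  shows "inner a (y - l2_trunc k y) = 0"
proof -
  have "inner a (y - l2_trunc k y) = inner (l2_trunc k a) (y - l2_trunc k y)"
    using assms by (simp add: l2_upto_iff_trunc)
  also have "\<dots> = inner a (l2_trunc k (y - l2_trunc k y))"
    by (rule inner_l2_trunc_commute)
  finally show ?thesis by simp
qed

lemma power2_norm_add_tail:
  assumes "a \<in> l2_upto k"
  shows "(norm (a + (y - l2_trunc k y)))\<^sup>2 = (norm a)\<^sup>2 + (norm (y - l2_trunc k y))\<^sup>2"
  using inner_l2_upto_tail[OF assms, of y]
  by (simp add: power2_norm_eq_inner inner_add_left inner_add_right inner_commute)

lemma power2_norm_trunc_split:
  "(norm x)\<^sup>2 = (norm (l2_trunc k x))\<^sup>2 + (norm (x - l2_trunc k x))\<^sup>2"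
  using power2_norm_add_tail[OF l2_trunc_in_upto, of k x x] by simp

lemma power2_norm_diff_trunc:
  assumes "a \<in> l2_upto k"
  shows "(norm (x - a))\<^sup>2 = (norm (l2_trunc k x - a))\<^sup>2 + (norm (x - l2_trunc k x))\<^sup>2"
proof -
  have "l2_trunc k x - a \<in> l2_upto k"
    by (rule subspace_diff[OF subspace_l2_upto l2_trunc_in_upto assms])
  moreover have "x - a = (l2_trunc k x - a) + (x - l2_trunc k x)" by simp
  ultimately show ?thesis by (metis power2_norm_add_tail)
qed

section \<open>Pair-difference operators\<close>

lemma sums_pairs:
  fixes h :: "nat \<Rightarrow> real"
  assumes "summable h"
  shows "(\<lambda>j. h (2*j+s) + h (2*j+s+1)) sums (suminf h - (\<Sum>i<s. h i))"
proof -
  have "(\<lambda>i. h (i+s)) sums (suminf h - (\<Sum>i<s. h i))"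
    by (rule sums_split_initial_segment[OF summable_sums[OF assms]])
  from sums_group[OF this, of 2]
  have "(\<lambda>n. sum (\<lambda>i. h (i+s)) {n*2..<n*2+2}) sums (suminf h - (\<Sum>i<s. h i))" by simp
  moreover have "sum (\<lambda>i. h (i+s)) {n*2..<n*2+2} = h (2*n+s) + h (2*n+s+1)" for n
  proof -
    have "{n*2..<n*2+2} = {n*2, n*2+1}" by auto
    thus ?thesis by (simp add: algebra_simps)
  qed
  ultimately show ?thesis by simp
qed

lemma suminf_pairs:
  fixes h :: "nat \<Rightarrow> real"
  assumes "summable h"
  shows "suminf h = (\<Sum>i<s. h i) + (\<Sum>j. h (2*j+s) + h (2*j+s+1))"
  using sums_unique[OF sums_pairs[OF assms, of s]] by simp

lemma summable_pairs:
  "summable (h :: nat \<Rightarrow> real) \<Longrightarrow> summable (\<lambda>j. h (2*j+s) + h (2*j+s+1))"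
  using sums_pairs sums_summable by blast

lemma summable_comp_div2:
  fixes a :: "nat \<Rightarrow> real"
  assumes "summable a" "\<And>i. 0 \<le> a i"
  shows "summable (\<lambda>i. a (i div 2))"
proof (rule summableI_nonneg_bounded[where x="2 * suminf a"])
  fix n
  have double: "(\<Sum>i<2*m. a (i div 2)) = 2 * (\<Sum>j<m. a j)" for m
    by (induction m) (simp_all add: sum.lessThan_Suc)
  have "(\<Sum>i<n. a (i div 2)) \<le> (\<Sum>i<2*n. a (i div 2))"
    by (rule sum_mono2) (auto simp: assms)
  also have "\<dots> \<le> 2 * suminf a"
    unfolding double using sum_le_suminf[OF assms(1), of "{..<n}"] assms(2) by simp
  finally show "(\<Sum>i<n. a (i div 2)) \<le> 2 * suminf a" .
qed (simp add: assms)

definition pair_diff :: "nat \<Rightarrow> l2 \<Rightarrow> l2" where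
  "pair_diff s x = Abs_l2 (\<lambda>j. l2_seq x (2*j+s) - l2_seq x (2*j+s+1))"

definition pair_diff_adj :: "nat \<Rightarrow> l2 \<Rightarrow> l2" where
  "pair_diff_adj s y = Abs_l2 (\<lambda>i. if i < s then 0
     else if even (i - s) then l2_seq y ((i - s) div 2) else - l2_seq y ((i - s) div 2))"

lemma summable_pair_diff_power2:
  "summable (\<lambda>j. (l2_seq x (2*j+s) - l2_seq x (2*j+s+1))\<^sup>2)"
proof (rule summable_comparison_test'[where
      g="\<lambda>j. 2 * ((l2_seq x (2*j+s))\<^sup>2 + (l2_seq x (2*j+s+1))\<^sup>2)"])
  show "summable (\<lambda>j. 2 * ((l2_seq x (2*j+s))\<^sup>2 + (l2_seq x (2*j+s+1))\<^sup>2))"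
    by (rule summable_mult[OF summable_pairs[OF l2_seq_summable_power2]])
  show "norm ((l2_seq x (2*j+s) - l2_seq x (2*j+s+1))\<^sup>2)
      \<le> 2 * ((l2_seq x (2*j+s))\<^sup>2 + (l2_seq x (2*j+s+1))\<^sup>2)" for j
    using l2_sq_add_le[of "l2_seq x (2*j+s)" "- l2_seq x (2*j+s+1)"] by simp
qed

lemma l2_seq_pair_diff [simp]:
  "l2_seq (pair_diff s x) j = l2_seq x (2*j+s) - l2_seq x (2*j+s+1)"
  unfolding pair_diff_def using summable_pair_diff_power2[of x s] by (simp add: l2_seq_Abs_l2)

lemma l2_seq_pair_diff_adj [simp]:
  "l2_seq (pair_diff_adj s y) i = (if i < s then 0
     else if even (i - s) then l2_seq y ((i - s) div 2) else - l2_seq y ((i - s) div 2))"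
proof -
  let ?g = "\<lambda>i. (if i < s then 0
     else if even (i - s) then l2_seq y ((i - s) div 2) else - l2_seq y ((i - s) div 2))\<^sup>2"
  have "summable (\<lambda>i. (l2_seq y (i div 2))\<^sup>2)"
    by (rule summable_comp_div2[where a="\<lambda>j. (l2_seq y j)\<^sup>2", OF l2_seq_summable_power2]) simp
  moreover have "(\<lambda>i. ?g (i + s)) = (\<lambda>i. (l2_seq y (i div 2))\<^sup>2)"
    by (auto simp: fun_eq_iff)
  ultimately have "summable ?g"
    by (simp add: summable_iff_shift[of ?g s, symmetric])
  thus ?thesis unfolding pair_diff_adj_def by (simp add: l2_seq_Abs_l2)
qed

lemma pair_diff_simps [simp]:
  "pair_diff s (x + y) = pair_diff s x + pair_diff s y"
  "pair_diff s (x - y) = pair_diff s x - pair_diff s y"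
  "pair_diff s (r *\<^sub>R x) = r *\<^sub>R pair_diff s x"
  "pair_diff s 0 = 0"
  by (rule l2_eqI; simp add: algebra_simps)+

lemma power2_norm_pair_diff_le: "(norm (pair_diff s x))\<^sup>2 \<le> 2 * (norm x)\<^sup>2"
proof -
  let ?pair = "\<lambda>j. (l2_seq x (2*j+s))\<^sup>2 + (l2_seq x (2*j+s+1))\<^sup>2"
  have "(norm (pair_diff s x))\<^sup>2 = (\<Sum>j. (l2_seq x (2*j+s) - l2_seq x (2*j+s+1))\<^sup>2)"
    by (simp add: power2_norm_l2_eq_suminf)
  also have "\<dots> \<le> (\<Sum>j. 2 * ?pair j)"
  proof (rule suminf_le)
    show "(l2_seq x (2*j+s) - l2_seq x (2*j+s+1))\<^sup>2 \<le> 2 * ?pair j" for j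
      using l2_sq_add_le[of "l2_seq x (2*j+s)" "- l2_seq x (2*j+s+1)"] by simp
  qed (intro summable_pair_diff_power2 summable_mult summable_pairs l2_seq_summable_power2)+
  also have "\<dots> = 2 * ((norm x)\<^sup>2 - (\<Sum>i<s. (l2_seq x i)\<^sup>2))"
    using suminf_pairs[OF l2_seq_summable_power2[of x], of s]
      suminf_mult[OF summable_pairs[OF l2_seq_summable_power2[of x]], of 2 s]
    by (simp add: power2_norm_l2_eq_suminf)
  also have "\<dots> \<le> 2 * (norm x)\<^sup>2"
    by (simp add: sum_nonneg)
  finally show ?thesis .
qed

lemma power2_norm_pair_diff_adj: "(norm (pair_diff_adj s y))\<^sup>2 = 2 * (norm y)\<^sup>2"
proof -
  let ?z = "pair_diff_adj s y"
  have "(norm ?z)\<^sup>2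
      = (\<Sum>i<s. (l2_seq ?z i)\<^sup>2) + (\<Sum>j. (l2_seq ?z (2*j+s))\<^sup>2 + (l2_seq ?z (2*j+s+1))\<^sup>2)"
    unfolding power2_norm_l2_eq_suminf by (rule suminf_pairs[OF l2_seq_summable_power2])
  also have "\<dots> = (\<Sum>j. 2 * (l2_seq y j)\<^sup>2)"
    by simp
  also have "\<dots> = 2 * (norm y)\<^sup>2"
    by (simp add: suminf_mult l2_seq_summable_power2 power2_norm_l2_eq_suminf)
  finally show ?thesis .
qed

lemma inner_pair_diff_adjoint: "inner (pair_diff s x) y = inner x (pair_diff_adj s y)"
proof -
  let ?z = "pair_diff_adj s y"
  have "inner x ?z = (\<Sum>i<s. l2_seq x i * l2_seq ?z i) +
      (\<Sum>j. l2_seq x (2*j+s) * l2_seq ?z (2*j+s) + l2_seq x (2*j+s+1) * l2_seq ?z (2*j+s+1))"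
    unfolding inner_l2_eq_suminf by (rule suminf_pairs[OF summable_l2_seq_mult])
  also have "\<dots> = (\<Sum>j. l2_seq (pair_diff s x) j * l2_seq y j)"
    by (simp add: algebra_simps)
  finally show ?thesis by (simp add: inner_l2_eq_suminf)
qed

lemma bounded_linear_pair_diff: "bounded_linear (pair_diff s)"
proof (rule bounded_linear_intro)
  show "norm (pair_diff s x) \<le> norm x * sqrt 2" for x
  proof -
    have "norm (pair_diff s x) \<le> sqrt (2 * (norm x)\<^sup>2)"
      using power2_norm_pair_diff_le by (rule real_le_rsqrt)
    thus ?thesis by (simp add: real_sqrt_mult mult.commute)
  qed
qed simp_all

lemma norm_pair_diff_gram_le: "norm (pair_diff_adj s (pair_diff s x)) \<le> 2 * norm x"
proof -
  have "(norm (pair_diff_adj s (pair_diff s x)))\<^sup>2 \<le> (2 * norm x)\<^sup>2"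
    using power2_norm_pair_diff_adj[of s "pair_diff s x"] power2_norm_pair_diff_le[of s x]
    by (simp add: power_mult_distrib)
  thus ?thesis by (rule power2_le_imp_le) simp
qed

lemma l2_seq_pair_diff_gram:
  "l2_seq (pair_diff_adj s (pair_diff s x)) i = (if i < s then 0
     else if even (i - s) then l2_seq x i - l2_seq x (i+1) else l2_seq x i - l2_seq x (i - 1))"
proof -
  consider "i < s" | "s \<le> i" "even (i - s)" | "s \<le> i" "odd (i - s)" by linarith
  thus ?thesis
  proof cases
    case 2
    hence "2 * ((i - s) div 2) + s = i" by simp
    thus ?thesis using 2 by simp
  next
    case 3
    hence "2 * ((i - s) div 2) + s + 1 = i"
      using odd_two_times_div_two_succ[of "i - s"] by linarith
    thus ?thesis using 3 by (auto simp: algebra_simps)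
  qed simp
qed

lemma power2_norm_convex_combination_le:
  fixes a b :: "'a::real_inner"
  assumes "0 \<le> t" "t \<le> 1"
  shows "(norm ((1-t) *\<^sub>R a + t *\<^sub>R b))\<^sup>2 \<le> (1-t) * (norm a)\<^sup>2 + t * (norm b)\<^sup>2"
proof -
  have "(1-t) * (norm a)\<^sup>2 + t * (norm b)\<^sup>2 - (norm ((1-t) *\<^sub>R a + t *\<^sub>R b))\<^sup>2
      = t * (1-t) * (norm (a - b))\<^sup>2"
    unfolding power2_norm_eq_inner
    by (simp add: inner_add_left inner_add_right inner_diff_left inner_diff_right
        inner_commute algebra_simps)
  moreover have "0 \<le> t * (1-t) * (norm (a - b))\<^sup>2" using assms by simp
  ultimately show ?thesis by linarith
qed

lemma convex_on_power2_norm: "convex_on UNIV (\<lambda>x::'a::real_inner. (norm x)\<^sup>2)"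
  by (rule convex_onI) (rule power2_norm_convex_combination_le, auto)

definition pair_energy :: "nat \<Rightarrow> l2 \<Rightarrow> real" where
  "pair_energy s x = (norm (pair_diff s x))\<^sup>2"

lemma pair_energy_nonneg: "0 \<le> pair_energy s x"
  unfolding pair_energy_def by simp

lemma pair_energy_le: "pair_energy s x \<le> 2 * (norm x)\<^sup>2"
  unfolding pair_energy_def by (rule power2_norm_pair_diff_le)

lemma pair_energy_add:
  "pair_energy s (x + d) = pair_energy s x + 2 * inner (pair_diff s x) (pair_diff s d) + pair_energy s d"
  unfolding pair_energy_def
  by (simp add: power2_norm_eq_inner inner_add_left inner_add_right inner_commute)

lemma convex_on_pair_energy: "convex_on UNIV (pair_energy s)"
proof (rule convex_onI)
  fix t :: real and x y :: l2 assume "0 < t" "t < 1"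
  thus "pair_energy s ((1 - t) *\<^sub>R x + t *\<^sub>R y) \<le> (1 - t) * pair_energy s x + t * pair_energy s y"
    unfolding pair_energy_def
    using power2_norm_convex_combination_le[of t "pair_diff s x" "pair_diff s y"] by simp
qed simp

lemma has_derivative_pair_energy:
  "(pair_energy s has_derivative (\<lambda>h. inner (2 *\<^sub>R pair_diff_adj s (pair_diff s x)) h)) (at x)"
proof -
  have D: "(pair_diff s has_derivative pair_diff s) (at x)"
    by (rule bounded_linear.has_derivative[OF bounded_linear_pair_diff has_derivative_ident])
  have "((\<lambda>x. inner (pair_diff s x) (pair_diff s x)) has_derivative
      (\<lambda>h. inner (pair_diff s x) (pair_diff s h) + inner (pair_diff s h) (pair_diff s x))) (at x)"
    by (rule has_derivative_inner[OF D D])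
  moreover have "(\<lambda>x. inner (pair_diff s x) (pair_diff s x)) = pair_energy s"
    by (simp add: pair_energy_def power2_norm_eq_inner fun_eq_iff)
  moreover have "(\<lambda>h. inner (pair_diff s x) (pair_diff s h) + inner (pair_diff s h) (pair_diff s x))
      = (\<lambda>h. inner (2 *\<^sub>R pair_diff_adj s (pair_diff s x)) h)"
    by (auto simp: fun_eq_iff inner_pair_diff_adjoint inner_commute)
  ultimately show ?thesis by simp
qed

lemma pair_energy_trunc_split:
  assumes "even (k + 1 + s)"
  shows "pair_energy s x = pair_energy s (l2_trunc k x) + pair_energy s (x - l2_trunc k x)"
proof -
  have same_side: "2*j+s \<le> k \<longleftrightarrow> 2*j+s+1 \<le> k" for j
  proof -
    have "2*j+s \<noteq> k" using assms by auto
    thus ?thesis by linarith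
  qed
  have "pair_energy s (l2_trunc k x) + pair_energy s (x - l2_trunc k x)
      = (\<Sum>j. (l2_seq (pair_diff s (l2_trunc k x)) j)\<^sup>2 + (l2_seq (pair_diff s (x - l2_trunc k x)) j)\<^sup>2)"
    unfolding pair_energy_def power2_norm_l2_eq_suminf
    by (rule suminf_add[OF l2_seq_summable_power2 l2_seq_summable_power2])
  also have "\<dots> = (\<Sum>j. (l2_seq (pair_diff s x) j)\<^sup>2)"
    using same_side by (intro arg_cong[where f=suminf] ext) auto
  finally show ?thesis unfolding pair_energy_def power2_norm_l2_eq_suminf by simp
qed

section \<open>The hard instance\<close>

lemma is_gradient_unique:
  assumes "is_gradient g G" "is_gradient g G'"
  shows "G = G'"
proof
  fix x
  have "(\<lambda>h. inner (G x) h) = (\<lambda>h. inner (G' x) h)"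
    using assms unfolding is_gradient_def by (metis has_derivative_unique)
  hence "inner (G x - G' x) (G x - G' x) = 0"
    by (metis inner_diff_left right_minus_eq)
  thus "G x = G' x" by simp
qed

definition hard_f :: "real \<Rightarrow> real \<Rightarrow> l2 \<Rightarrow> real" where
  "hard_f c b x = c/2 * pair_energy 1 x - b * inner (l2_unit 0) x"

definition hard_f_grad :: "real \<Rightarrow> real \<Rightarrow> l2 \<Rightarrow> l2" where
  "hard_f_grad c b x = c *\<^sub>R pair_diff_adj 1 (pair_diff 1 x) - b *\<^sub>R l2_unit 0"

definition hard_u :: "real \<Rightarrow> real \<Rightarrow> l2 \<Rightarrow> real" where
  "hard_u c a x = a/2 * (norm x)\<^sup>2 + c/2 * pair_energy 0 x"

lemma is_gradient_hard_f: "is_gradient (hard_f c b) (hard_f_grad c b)"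
  unfolding is_gradient_def
proof
  fix x
  have "((\<lambda>x. c/2 * pair_energy 1 x - b * inner (l2_unit 0) x) has_derivative
      (\<lambda>h. c/2 * inner (2 *\<^sub>R pair_diff_adj 1 (pair_diff 1 x)) h - b * inner (l2_unit 0) h)) (at x)"
    by (intro derivative_intros has_derivative_pair_energy)
  moreover have "(\<lambda>h. c/2 * inner (2 *\<^sub>R pair_diff_adj 1 (pair_diff 1 x)) h - b * inner (l2_unit 0) h)
      = (\<lambda>h. inner (hard_f_grad c b x) h)"
    by (simp add: hard_f_grad_def fun_eq_iff inner_diff_left)
  ultimately show "(hard_f c b has_derivative (\<lambda>h. inner (hard_f_grad c b x) h)) (at x)"
    unfolding hard_f_def[abs_def] by simp
qed

lemma hard_f_grad_diff:
  "hard_f_grad c b x - hard_f_grad c b y = c *\<^sub>R pair_diff_adj 1 (pair_diff 1 (x - y))"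
  by (rule l2_eqI) (simp add: hard_f_grad_def algebra_simps)

lemma lipschitz_on_hard_f_grad: "0 \<le> c \<Longrightarrow> (2*c)-lipschitz_on UNIV (hard_f_grad c b)"
proof (rule lipschitz_onI)
  fix x y assume "0 \<le> c"
  have "dist (hard_f_grad c b x) (hard_f_grad c b y) = c * norm (pair_diff_adj 1 (pair_diff 1 (x - y)))"
    using \<open>0 \<le> c\<close> by (simp add: dist_norm hard_f_grad_diff)
  also have "\<dots> \<le> c * (2 * norm (x - y))"
    using \<open>0 \<le> c\<close> norm_pair_diff_gram_le by (rule mult_left_mono[rotated])
  finally show "dist (hard_f_grad c b x) (hard_f_grad c b y) \<le> 2 * c * dist x y"
    by (simp add: dist_norm)
qed simp

lemma grad_lip_const_hard_f:
  assumes "0 < c"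
  shows "grad_lip_const (hard_f c b) = 2*c"
  unfolding grad_lip_const_def
proof (rule cInf_eq_minimum)
  show "2*c \<in> {L. \<exists>G. is_gradient (hard_f c b) G \<and> L-lipschitz_on UNIV G}"
    using is_gradient_hard_f lipschitz_on_hard_f_grad assms by fastforce
next
  fix L assume "L \<in> {L. \<exists>G. is_gradient (hard_f c b) G \<and> L-lipschitz_on UNIV G}"
  then obtain G where G: "is_gradient (hard_f c b) G" "L-lipschitz_on UNIV G" by auto
  have G_eq: "G = hard_f_grad c b" using is_gradient_unique[OF G(1) is_gradient_hard_f] .
  \<comment> \<open>The Lipschitz bound is attained on a vector supported on the single link (1, 2).\<close>
  define v where "v = l2_unit 1 - l2_unit 2"
  have "l2_seq v 1 = 1" by (simp add: v_def)
  hence v_pos: "0 < norm v" by auto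
  have "pair_diff_adj 1 (pair_diff 1 v) = 2 *\<^sub>R v"
  proof (rule l2_eqI)
    show "l2_seq (pair_diff_adj 1 (pair_diff 1 v)) i = l2_seq (2 *\<^sub>R v) i" for i
      unfolding l2_seq_pair_diff_gram
      by (cases "i = 0"; cases "i = 1"; cases "i = 2"; cases "i = 3") (auto simp: v_def)
  qed
  hence "2 * c * norm v = dist (G v) (G 0)"
    using assms by (simp add: G_eq dist_norm hard_f_grad_diff)
  also have "\<dots> \<le> L * norm v"
    using lipschitz_onD[OF G(2), of v 0] by simp
  finally show "2*c \<le> L" using v_pos by simp
qed

lemma convex_on_hard_f: "0 \<le> c \<Longrightarrow> convex_on UNIV (hard_f c b)"
proof -
  assume "0 \<le> c"
  have lin: "convex_on UNIV (\<lambda>x::l2. r * inner v x)" for r v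
    by (rule convex_onI) (auto simp: inner_add_right algebra_simps)
  have "convex_on UNIV (\<lambda>x. c/2 * pair_energy 1 x + (-b) * inner (l2_unit 0) x)"
    using \<open>0 \<le> c\<close> by (intro convex_on_add convex_on_cmul convex_on_pair_energy lin) auto
  thus ?thesis unfolding hard_f_def[abs_def] by simp
qed

lemma smooth_convex_hard_f: "0 \<le> c \<Longrightarrow> smooth_convex (hard_f c b)"
  unfolding smooth_convex_def
  using convex_on_hard_f is_gradient_hard_f lipschitz_on_hard_f_grad by blast

lemma convex_on_hard_u: "0 \<le> c \<Longrightarrow> 0 \<le> a \<Longrightarrow> convex_on UNIV (hard_u c a)"
  unfolding hard_u_def[abs_def]
  by (intro convex_on_add convex_on_cmul convex_on_pair_energy convex_on_power2_norm) auto

lemma closed_fun_on_hard_u: "closed_fun_on UNIV (hard_u c a)"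
proof -
  have "continuous_on UNIV (pair_diff 0)"
    by (rule linear_continuous_on[OF bounded_linear_pair_diff])
  hence "continuous_on UNIV (\<lambda>x. a/2 * (norm x)\<^sup>2 + c/2 * (norm (pair_diff 0 x))\<^sup>2)"
    by (intro continuous_intros) (auto intro: continuous_on_compose2)
  hence cont: "continuous_on UNIV (hard_u c a)"
    unfolding hard_u_def[abs_def] pair_energy_def by simp
  have "closed {p :: l2 \<times> real. hard_u c a (fst p) \<le> snd p}"
    by (rule closed_Collect_le) (intro continuous_on_compose2[OF cont] continuous_intros | simp)+
  moreover have "{(x, y). x \<in> UNIV \<and> hard_u c a x \<le> y} = {p. hard_u c a (fst p) \<le> snd p}"
    by auto
  ultimately show ?thesis unfolding closed_fun_on_def by simp
qed

lemma strong_convexity_modulus_hard_u: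
  assumes "0 \<le> c" "0 < a"
  shows "strong_convexity_modulus UNIV (hard_u c a) a"
  unfolding strong_convexity_modulus_def strongly_convex_on_def
proof safe
  have "convex_on UNIV (\<lambda>x. c/2 * pair_energy 0 x)"
    using assms by (intro convex_on_cmul convex_on_pair_energy) auto
  thus "convex_on UNIV (\<lambda>x. hard_u c a x - a / 2 * (norm x)\<^sup>2)"
    unfolding hard_u_def by simp
next
  fix a' assume "a < a'" and cvx: "convex_on UNIV (\<lambda>x. hard_u c a x - a' / 2 * (norm x)\<^sup>2)"
  let ?g = "\<lambda>x. hard_u c a x - a' / 2 * (norm x)\<^sup>2"
  \<comment> \<open>Along the kernel of \<open>pair_diff 0\<close>, \<open>?g\<close> is the strictly concave \<open>(a - a')/2 * norm x ^ 2\<close>.\<close>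
  define v where "v = l2_unit 0 + l2_unit 1"
  have energy_zero: "pair_energy 0 (r *\<^sub>R v) = 0" for r
  proof -
    have "pair_diff 0 v = 0" by (rule l2_eqI) (simp add: v_def)
    thus ?thesis by (simp add: pair_energy_def)
  qed
  have norm_v: "(norm v)\<^sup>2 = 2"
    by (simp add: power2_norm_eq_inner v_def inner_add_left inner_add_right inner_l2_unit)
  have "?g ((1/2) *\<^sub>R 0 + (1/2) *\<^sub>R v) \<le> (1/2) * ?g 0 + (1/2) * ?g v"
    using convex_onD[OF cvx, of "1/2" 0 v] by simp
  moreover have "?g ((1/2) *\<^sub>R 0 + (1/2) *\<^sub>R v) = (a - a')/2 * (1/4) * (norm v)\<^sup>2"
    using energy_zero[of "1/2"] by (simp add: hard_u_def power_mult_distrib algebra_simps power_divide)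
  moreover have "?g v = (a - a')/2 * (norm v)\<^sup>2"
    using energy_zero[of 1] by (simp add: hard_u_def algebra_simps)
  moreover have "?g 0 = 0" by (simp add: hard_u_def pair_energy_def)
  ultimately show False using \<open>a < a'\<close> norm_v by simp
qed

lemma hard_f_trunc_split:
  assumes "even k"
  shows "hard_f c b x = hard_f c b (l2_trunc k x) + c/2 * pair_energy 1 (x - l2_trunc k x)"
proof -
  have "pair_energy 1 x = pair_energy 1 (l2_trunc k x) + pair_energy 1 (x - l2_trunc k x)"
    by (rule pair_energy_trunc_split) (use assms in simp)
  moreover have "inner (l2_unit 0) (l2_trunc k x) = inner (l2_unit 0) x"
    by (simp add: inner_l2_unit)
  ultimately show ?thesis unfolding hard_f_def by (simp add: algebra_simps)
qed

lemma hard_u_trunc_split: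
  assumes "odd k"
  shows "hard_u c a x = hard_u c a (l2_trunc k x)
    + a/2 * (norm (x - l2_trunc k x))\<^sup>2 + c/2 * pair_energy 0 (x - l2_trunc k x)"
proof -
  have "pair_energy 0 x = pair_energy 0 (l2_trunc k x) + pair_energy 0 (x - l2_trunc k x)"
    by (rule pair_energy_trunc_split) (use assms in simp)
  thus ?thesis
    unfolding hard_u_def using power2_norm_trunc_split[of x k] by (simp add: algebra_simps)
qed

lemma smooth_instance_hard:
  assumes "0 \<le> c" "0 \<le> a"
  shows "smooth_instance 1 (\<lambda>_. hard_f c b) {l2_unit 0} (\<lambda>_. 0) (hard_u c a) UNIV"
proof -
  have "{(x, y). x \<in> {l2_unit 0} \<and> (0::real) \<le> y} = {l2_unit 0} \<times> {0..}" by auto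
  hence "closed_fun_on {l2_unit 0} (\<lambda>_. 0::real)"
    unfolding closed_fun_on_def by (simp add: closed_Times)
  thus ?thesis
    unfolding smooth_instance_def simplex_subset_def
    using assms convex_on_hard_u closed_fun_on_hard_u smooth_convex_hard_f
    by (simp add: convex_on_const)
qed

lemma aggregate_smoothness_hard:
  assumes "0 < c"
  shows "aggregate_smoothness 1 (\<lambda>_. hard_f c b) {l2_unit 0} (2*c)"
  unfolding aggregate_smoothness_def using grad_lip_const_hard_f[OF assms] by simp

lemma objective_hard:
  "objective 1 (\<lambda>_. hard_f c b) {l2_unit 0} (\<lambda>_. 0) (hard_u c a) x = hard_f c b x + hard_u c a x"
  by (simp add: objective_def)

lemma hard_objective_minimal:
  assumes "0 \<le> c" "0 \<le> a"
    and grad: "c *\<^sub>R pair_diff_adj 1 (pair_diff 1 xs) + c *\<^sub>R pair_diff_adj 0 (pair_diff 0 xs)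
      + a *\<^sub>R xs - b *\<^sub>R l2_unit 0 = 0"
  shows "hard_f c b xs + hard_u c a xs \<le> hard_f c b x + hard_u c a x"
proof -
  define d where "d = x - xs"
  have x_eq: "x = xs + d" by (simp add: d_def)
  have adj: "inner (pair_diff s xs) (pair_diff s d) = inner (pair_diff_adj s (pair_diff s xs)) d" for s
    by (metis inner_pair_diff_adjoint inner_commute)
  \<comment> \<open>The first-order term of the quadratic expansion around \<open>xs\<close> is \<open>grad\<close> applied to \<open>d\<close>.\<close>
  have linear_part: "c * inner (pair_diff 1 xs) (pair_diff 1 d) + c * inner (pair_diff 0 xs) (pair_diff 0 d)
      + a * inner xs d - b * inner (l2_unit 0) d = 0"
    using arg_cong[OF grad, of "\<lambda>v. inner v d"]
    unfolding adj by (simp add: inner_add_left inner_diff_left)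
  have norm_expand: "(norm (xs + d))\<^sup>2 = (norm xs)\<^sup>2 + 2 * inner xs d + (norm d)\<^sup>2"
    by (simp add: power2_norm_eq_inner inner_add_left inner_add_right inner_commute)
  have "hard_f c b x + hard_u c a x = (hard_f c b xs + hard_u c a xs)
      + (c * inner (pair_diff 1 xs) (pair_diff 1 d) + c * inner (pair_diff 0 xs) (pair_diff 0 d)
         + a * inner xs d - b * inner (l2_unit 0) d)
      + (c/2 * pair_energy 1 d + c/2 * pair_energy 0 d + a/2 * (norm d)\<^sup>2)"
    unfolding x_eq hard_f_def hard_u_def pair_energy_add norm_expand inner_add_right
    by (simp add: algebra_simps)
  moreover have "0 \<le> c/2 * pair_energy 1 d + c/2 * pair_energy 0 d + a/2 * (norm d)\<^sup>2"
    using assms(1,2) pair_energy_nonneg by simp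
  ultimately show ?thesis using linear_part by linarith
qed

lemma hard_grad_geom_eq_zero:
  assumes "0 \<le> q" "q < 1" and ratio: "a * q = c * (1-q)\<^sup>2"
  shows "c *\<^sub>R pair_diff_adj 1 (pair_diff 1 (l2_geom R q)) + c *\<^sub>R pair_diff_adj 0 (pair_diff 0 (l2_geom R q))
      + a *\<^sub>R l2_geom R q - (R * (c*(1-q) + a)) *\<^sub>R l2_unit 0 = 0"
proof (rule l2_eqI)
  note geom = l2_seq_geom[OF assms(1,2)]
  fix i
  show "l2_seq (c *\<^sub>R pair_diff_adj 1 (pair_diff 1 (l2_geom R q))
      + c *\<^sub>R pair_diff_adj 0 (pair_diff 0 (l2_geom R q))
      + a *\<^sub>R l2_geom R q - (R * (c*(1-q) + a)) *\<^sub>R l2_unit 0) i = l2_seq 0 i"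
  proof (cases i)
    case 0
    thus ?thesis by (simp add: l2_seq_pair_diff_gram geom algebra_simps)
  next
    case (Suc j)
    \<comment> \<open>Away from coordinate 0 both links are present, giving the recursion of Nesterov's chain.\<close>
    have links: "l2_seq (pair_diff_adj 1 (pair_diff 1 (l2_geom R q))) (Suc j)
        + l2_seq (pair_diff_adj 0 (pair_diff 0 (l2_geom R q))) (Suc j)
        = 2 * (R * q ^ Suc j) - R * q ^ (Suc j + 1) - R * q ^ j"
      by (cases "even j") (simp_all add: l2_seq_pair_diff_gram geom)
    have "c * (2 * (R * q ^ Suc j) - R * q ^ (Suc j + 1) - R * q ^ j) + a * (R * q ^ Suc j)
        = R * q ^ j * (a * q - c * (1-q)\<^sup>2)"
      by (simp add: algebra_simps power2_eq_square)
    thus ?thesis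
      using Suc links ratio by (simp add: geom algebra_simps)
  qed
qed

lemma is_optimal_hard:
  assumes "0 \<le> c" "0 \<le> a" "0 \<le> q" "q < 1" "a * q = c * (1-q)\<^sup>2"
  shows "is_optimal 1 (\<lambda>_. hard_f c (R * (c*(1-q) + a))) {l2_unit 0} (\<lambda>_. 0) (hard_u c a) UNIV
    (l2_geom R q)"
  unfolding is_optimal_def objective_hard
  using hard_objective_minimal[OF assms(1,2) hard_grad_geom_eq_zero[OF assms(3-5)]] by simp

section \<open>DPM algorithms explore two coordinates per round\<close>

lemma conj_fun_l2_trunc_le:
  assumes C: "0 < C"
    and lower: "\<And>x. F (l2_trunc k x) \<le> F x"
    and upper: "\<And>x. F x \<le> F (l2_trunc k x) + C * (norm (x - l2_trunc k x))\<^sup>2"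
    and p: "p \<in> conj_dom F"
  shows "l2_trunc k p \<in> conj_dom F"
    and "conj_fun F (l2_trunc k p) + (norm (p - l2_trunc k p))\<^sup>2 / (4*C) \<le> conj_fun F p"
proof -
  define p1 where "p1 = l2_trunc k p"
  define p2 where "p2 = p - p1"
  have bdd: "bdd_above (range (\<lambda>x. inner x p - F x))"
    using p unfolding conj_dom_def by simp
  have inner_p2: "inner p2 p = (norm p2)\<^sup>2"
  proof -
    have "inner p1 p2 = 0"
      unfolding p1_def p2_def by (rule inner_l2_upto_tail[OF l2_trunc_in_upto])
    moreover have "p = p1 + p2" by (simp add: p2_def)
    ultimately show ?thesis
      by (metis add_0 inner_add_right inner_commute power2_norm_eq_inner)
  qed
  \<comment> \<open>Replacing the tail of \<open>y\<close> by \<open>p2 / (2 C)\<close> gains \<open>norm p2 ^ 2 / (4 C)\<close> in the supremum.\<close>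
  have gain: "inner y p1 - F y \<le> conj_fun F p - (norm p2)\<^sup>2 / (4*C)" for y
  proof -
    define w where "w = l2_trunc k y + (1 / (2*C)) *\<^sub>R p2"
    have "l2_trunc k p2 = 0" by (simp add: p2_def p1_def)
    hence "F w \<le> F (l2_trunc k y) + C * (norm ((1 / (2*C)) *\<^sub>R p2))\<^sup>2"
      using upper[of w] by (simp add: w_def)
    also have "C * (norm ((1 / (2*C)) *\<^sub>R p2))\<^sup>2 = (norm p2)\<^sup>2 / (4*C)"
      using C by (simp add: power_mult_distrib power2_eq_square field_simps)
    finally have "F w \<le> F y + (norm p2)\<^sup>2 / (4*C)"
      using lower[of y] by linarith
    moreover have "inner w p = inner y p1 + 2 * ((norm p2)\<^sup>2 / (4*C))"
      using C by (simp add: w_def inner_add_left inner_l2_trunc_commute p1_def[symmetric] inner_p2)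
    moreover have "inner w p - F w \<le> conj_fun F p"
      unfolding conj_fun_def by (rule cSUP_upper[OF UNIV_I bdd])
    ultimately show ?thesis by linarith
  qed
  show "l2_trunc k p \<in> conj_dom F"
    unfolding conj_dom_def p1_def[symmetric] by (auto intro: bdd_aboveI2 gain)
  have "conj_fun F p1 \<le> conj_fun F p - (norm p2)\<^sup>2 / (4*C)"
    unfolding conj_fun_def[of F p1] by (rule cSUP_least) (simp_all add: gain)
  thus "conj_fun F (l2_trunc k p) + (norm (p - l2_trunc k p))\<^sup>2 / (4*C) \<le> conj_fun F p"
    by (simp add: p1_def p2_def)
qed

lemma conj_prox_in_l2_upto:
  assumes C: "0 < C"
    and lower: "\<And>x. F (l2_trunc k x) \<le> F x"
    and upper: "\<And>x. F x \<le> F (l2_trunc k x) + C * (norm (x - l2_trunc k x))\<^sup>2"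
    and xb: "xb \<in> l2_upto k" and pb: "pb \<in> l2_upto k" and \<tau>: "0 \<le> \<tau>"
    and p': "p' \<in> conj_dom F"
    and max: "\<forall>p\<in>conj_dom F. inner xb p - conj_fun F p - \<tau> / 2 * (norm (p - pb))\<^sup>2
                 \<le> inner xb p' - conj_fun F p' - \<tau> / 2 * (norm (p' - pb))\<^sup>2"
  shows "p' \<in> l2_upto k"
proof -
  let ?tail = "p' - l2_trunc k p'"
  have "inner xb (l2_trunc k p') = inner xb p'"
    using inner_l2_upto_tail[OF xb, of p'] by (simp add: inner_diff_right)
  moreover have "(norm (p' - pb))\<^sup>2 = (norm (l2_trunc k p' - pb))\<^sup>2 + (norm ?tail)\<^sup>2"
    by (rule power2_norm_diff_trunc[OF pb])
  moreover have "inner xb (l2_trunc k p') - conj_fun F (l2_trunc k p')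
      - \<tau> / 2 * (norm (l2_trunc k p' - pb))\<^sup>2
    \<le> inner xb p' - conj_fun F p' - \<tau> / 2 * (norm (p' - pb))\<^sup>2"
    using max conj_fun_l2_trunc_le(1)[OF C lower upper p'] by blast
  ultimately have "(norm ?tail)\<^sup>2 / (4*C) + \<tau> / 2 * (norm ?tail)\<^sup>2 \<le> 0"
    using conj_fun_l2_trunc_le(2)[OF C lower upper p'] by (simp add: algebra_simps)
  moreover have "0 \<le> \<tau> / 2 * (norm ?tail)\<^sup>2" using \<tau> by simp
  ultimately have "(norm ?tail)\<^sup>2 / (4*C) \<le> 0" by linarith
  hence "l2_trunc k p' = p'" using C by (simp add: divide_le_0_iff)
  thus ?thesis by (simp add: l2_upto_iff_trunc)
qed

lemma prox_in_l2_upto: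
  assumes lower: "\<And>x. u (l2_trunc k x) \<le> u x"
    and xb: "xb \<in> l2_upto k" and \<eta>: "0 < \<eta>"
    and min: "\<forall>x\<in>UNIV. u z + \<eta> / 2 * (norm (z - xb))\<^sup>2 \<le> u x + \<eta> / 2 * (norm (x - xb))\<^sup>2"
  shows "z \<in> l2_upto k"
proof -
  have "u z + \<eta> / 2 * (norm (z - xb))\<^sup>2 \<le> u (l2_trunc k z) + \<eta> / 2 * (norm (l2_trunc k z - xb))\<^sup>2"
    using min by blast
  hence "\<eta> / 2 * (norm (z - l2_trunc k z))\<^sup>2 \<le> 0"
    using lower[of z] power2_norm_diff_trunc[OF xb, of z] by (simp add: algebra_simps)
  hence "l2_trunc k z = z" using \<eta> by (simp add: mult_le_0_iff)
  thus ?thesis by (simp add: l2_upto_iff_trunc)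
qed

definition dpm_within :: "nat \<Rightarrow> nat \<Rightarrow> (l2, l2) dpm_state \<Rightarrow> bool" where
  "dpm_within a b s \<longleftrightarrow>
     fst s \<subseteq> l2_upto a \<and> (\<forall>i. fst (snd s i) \<subseteq> l2_upto b \<and> snd (snd s i) \<subseteq> l2_upto b)"

lemma comm_round_within:
  assumes within: "dpm_within a b s" and "b \<le> a" and round: "comm_round m s s'"
  shows "dpm_within (a+2) (a+1) s'"
proof -
  from round obtain v w where v: "\<forall>i<m. v i \<in> span (fst (snd s i))"
    and server: "fst s' = fst s \<union> v ` {..<m}" and w: "\<forall>i<m. w i \<in> span (fst s')"
    and workers: "snd s' = (\<lambda>i. if i < m then (fst (snd s i) \<union> {w i}, snd (snd s i)) else snd s i)"
    unfolding comm_round_def by blast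
  have "l2_upto b \<subseteq> l2_upto a" "l2_upto b \<subseteq> l2_upto (a+1)"
    "l2_upto a \<subseteq> l2_upto (a+1)" "l2_upto a \<subseteq> l2_upto (a+2)"
    using l2_upto_mono \<open>b \<le> a\<close> by auto
  note mono = this
  have "fst s' \<subseteq> l2_upto a"
    using within v span_subset_l2_upto mono(1) unfolding server dpm_within_def by blast
  hence "w i \<in> l2_upto a" if "i < m" for i
    using w span_subset_l2_upto that by blast
  moreover have "fst (snd s i) \<subseteq> l2_upto (a+1) \<and> snd (snd s i) \<subseteq> l2_upto (a+1)" for i
    using within mono unfolding dpm_within_def by blast
  ultimately show ?thesis
    using \<open>fst s' \<subseteq> l2_upto a\<close> mono unfolding workers dpm_within_def by auto
qed

locale split_chain_instance =
  fixes m :: nat and f :: "nat \<Rightarrow> l2 \<Rightarrow> real" and u :: "l2 \<Rightarrow> real" and C :: real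
  assumes C_pos: "0 < C"
    and f_trunc_le: "\<And>i k x. i < m \<Longrightarrow> even k \<Longrightarrow> f i (l2_trunc k x) \<le> f i x"
    and f_le_trunc: "\<And>i k x. i < m \<Longrightarrow> even k \<Longrightarrow>
      f i x \<le> f i (l2_trunc k x) + C * (norm (x - l2_trunc k x))\<^sup>2"
    and u_trunc_le: "\<And>k x. odd k \<Longrightarrow> u (l2_trunc k x) \<le> u x"
begin

lemma local_step_within:
  assumes within: "dpm_within a b s" and "odd a" "even b"
    and "local_step m (\<lambda>i. id) (\<lambda>i. id) (\<lambda>i. conj_dom (f i)) (\<lambda>i. conj_fun (f i)) UNIV u s s'"
  shows "dpm_within a b s'"
  using assms(4) unfolding local_step_def
proof (elim disjE exE conjE)
  fix i assume i: "i < m" and server: "fst s' = fst s"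
    and step: "worker_step id id (conj_dom (f i)) (conj_fun (f i)) (snd s i) (snd s' i)"
    and others: "\<forall>j. j \<noteq> i \<longrightarrow> snd s' j = snd s j"
  from step obtain xb pb \<tau> p' where
    xb: "xb \<in> span (fst (snd s i))" and pb: "pb \<in> span (snd (snd s i))" and \<tau>: "0 \<le> \<tau>"
    and p': "p' \<in> conj_dom (f i)"
    and max: "\<forall>p\<in>conj_dom (f i). inner xb p - conj_fun (f i) p - \<tau> / 2 * (norm (p - pb))\<^sup>2
                 \<le> inner xb p' - conj_fun (f i) p' - \<tau> / 2 * (norm (p' - pb))\<^sup>2"
    and memory: "snd s' i = (fst (snd s i) \<union> {p', pb}, snd (snd s i) \<union> {p', xb})"
    unfolding worker_step_def id_def by blast
  have xb_in: "xb \<in> l2_upto b" and pb_in: "pb \<in> l2_upto b"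
    using xb pb span_subset_l2_upto within unfolding dpm_within_def by blast+
  have "p' \<in> l2_upto b"
    using conj_prox_in_l2_upto[OF C_pos f_trunc_le[OF i \<open>even b\<close>] f_le_trunc[OF i \<open>even b\<close>]
        xb_in pb_in \<tau> p' max] .
  hence "fst (snd s' j) \<subseteq> l2_upto b \<and> snd (snd s' j) \<subseteq> l2_upto b" for j
    using within others memory xb_in pb_in unfolding dpm_within_def by (cases "j = i") auto
  thus "dpm_within a b s'" using within server unfolding dpm_within_def by simp
next
  assume step: "server_step UNIV u (fst s) (fst s')" and workers: "snd s' = snd s"
  from step obtain xb \<eta> z where xb: "xb \<in> span (fst s)" and \<eta>: "0 < \<eta>"
    and min: "\<forall>x\<in>UNIV. u z + \<eta> / 2 * (norm (z - xb))\<^sup>2 \<le> u x + \<eta> / 2 * (norm (x - xb))\<^sup>2"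
    and server: "fst s' = fst s \<union> {z}"
    unfolding server_step_def by blast
  have "xb \<in> l2_upto a"
    using xb span_subset_l2_upto within unfolding dpm_within_def by blast
  hence "z \<in> l2_upto a"
    using prox_in_l2_upto[OF u_trunc_le[OF \<open>odd a\<close>] _ \<eta> min] by blast
  thus "dpm_within a b s'" using within server workers unfolding dpm_within_def by auto
qed

lemma local_steps_within:
  assumes "(local_step m (\<lambda>i. id) (\<lambda>i. id) (\<lambda>i. conj_dom (f i)) (\<lambda>i. conj_fun (f i)) UNIV u)\<^sup>*\<^sup>* s s'"
    and "dpm_within a b s" "odd a" "even b"
  shows "dpm_within a b s'"
  using assms(1,2)
proof (induction rule: rtranclp_induct)
  case (step s' s'')
  thus ?case using local_step_within assms(3,4) by blast
qed

lemma smooth_dpm_reach_within: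
  assumes "smooth_dpm_reach m f UNIV u t s"
  shows "dpm_within (2*t+1) (2*t) s"
  using assms unfolding smooth_dpm_reach_def
proof (induction rule: dpm_reach.induct)
  case (init s)
  have "dpm_within 1 0 dpm_init"
    unfolding dpm_within_def dpm_init_def l2_upto_def by auto
  thus ?case using local_steps_within[OF init] by simp
next
  case (round t s s1 s2)
  have "dpm_within (2*t+1+2) (2*t+1+1) s1"
    by (rule comm_round_within[OF round.IH _ round.hyps(2)]) simp
  thus ?case using local_steps_within[OF round.hyps(3)] by (simp add: algebra_simps)
qed

lemma smooth_dpm_outputs_within:
  assumes "smooth_dpm_reach m f UNIV u t s"
  shows "dpm_outputs m s \<subseteq> l2_upto (2*t+1)"
proof -
  have "l2_upto (2*t) \<subseteq> l2_upto (2*t+1)" by (rule l2_upto_mono) simp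
  thus ?thesis
    using smooth_dpm_reach_within[OF assms] unfolding dpm_outputs_def dpm_within_def
    by (intro span_subset_l2_upto) blast
qed

end

lemma split_chain_instance_hard:
  assumes "0 < c" "0 \<le> a"
  shows "split_chain_instance m (\<lambda>_. hard_f c b) (hard_u c a) c"
proof
  fix i k :: nat and x :: l2
  assume "even k"
  note split = hard_f_trunc_split[OF \<open>even k\<close>, of c b x]
  show "hard_f c b (l2_trunc k x) \<le> hard_f c b x"
    using split pair_energy_nonneg[of 1 "x - l2_trunc k x"] assms by simp
  have "c/2 * pair_energy 1 (x - l2_trunc k x) \<le> c/2 * (2 * (norm (x - l2_trunc k x))\<^sup>2)"
    using pair_energy_le assms by (intro mult_left_mono) auto
  thus "hard_f c b x \<le> hard_f c b (l2_trunc k x) + c * (norm (x - l2_trunc k x))\<^sup>2"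
    using split by simp
next
  fix k :: nat and x :: l2
  assume "odd k"
  thus "hard_u c a (l2_trunc k x) \<le> hard_u c a x"
    using hard_u_trunc_split[of k c a x] pair_energy_nonneg[of 0 "x - l2_trunc k x"] assms
    by simp
qed (use assms in simp)

lemma power2_norm_diff_geom_ge:
  assumes "0 < q" "q < 1" "x \<in> l2_upto (2*t+1)"
  shows "q ^ (4*t) \<le> (norm (x - l2_geom (1/q\<^sup>2) q))\<^sup>2"
proof -
  have "l2_seq (x - l2_geom (1/q\<^sup>2) q) (2*t+2) = - (q ^ (2*t))"
    using assms by (simp add: l2_upto_def l2_seq_geom power_add power2_eq_square)
  hence "(q ^ (2*t))\<^sup>2 \<le> (norm (x - l2_geom (1/q\<^sup>2) q))\<^sup>2"
    using l2_seq_power2_le_power2_norm[of "x - l2_geom (1/q\<^sup>2) q" "2*t+2"] by simp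
  thus ?thesis by (simp add: power_mult[symmetric] mult.commute)
qed

lemma exists_chain_ratio:
  fixes r :: real
  assumes "0 < r" "r < 1/4"
  shows "\<exists>q. 1/2 \<le> q \<and> q < 1 \<and> (1-q)\<^sup>2 = r * q"
proof -
  let ?g = "\<lambda>q::real. (1-q)\<^sup>2 - r * q"
  have "?g 1 \<le> 0" "0 \<le> ?g (1/2)" using assms by (simp_all add: power2_eq_square)
  then obtain q where q: "1/2 \<le> q" "q \<le> 1" "?g q = 0"
    using IVT2[of ?g 1 0 "1/2"] by (auto intro!: continuous_intros)
  have "q \<noteq> 1" using q(3) assms by auto
  thus ?thesis using q by auto
qed

lemma rounds_lower_bound:
  assumes q: "1/2 \<le> q" "q < 1" and \<epsilon>: "0 < \<epsilon>" and decay: "q ^ (4*t) \<le> \<epsilon>"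
  shows "1/8 * sqrt (2*q / (1-q)\<^sup>2) * ln (1/\<epsilon>) \<le> real t"
proof (cases "\<epsilon> < 1")
  case False
  hence "sqrt (2*q / (1-q)\<^sup>2) * ln (1/\<epsilon>) \<le> 0"
    using \<epsilon> q by (intro mult_nonneg_nonpos) simp_all
  thus ?thesis by simp
next
  case True
  have q_pos: "0 < q" using q by simp
  have "ln (1/\<epsilon>) = - ln \<epsilon>" using \<epsilon> by (simp add: ln_div)
  also have "\<dots> \<le> 4 * t * ln (1/q)"
    using ln_le_cancel_iff[of "q ^ (4*t)" \<epsilon>] decay \<epsilon> q_pos by (simp add: ln_realpow ln_div)
  also have "\<dots> \<le> 4 * t * ((1-q)/q)"
    using ln_le_minus_one[of "1/q"] q_pos by (intro mult_left_mono) (auto simp: field_simps)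
  finally have log_bound: "ln (1/\<epsilon>) \<le> 4 * t * ((1-q)/q)" .
  \<comment> \<open>Here \<open>q \<ge> 1/2\<close> is used: \<open>2 q \<le> (2 q)\<^sup>2\<close>.\<close>
  have "2*q / (1-q)\<^sup>2 \<le> (2*q / (1-q))\<^sup>2"
    using q by (simp add: power_divide divide_right_mono power2_eq_square)
  hence "sqrt (2*q / (1-q)\<^sup>2) \<le> sqrt ((2*q / (1-q))\<^sup>2)"
    by (rule real_sqrt_le_mono)
  also have "\<dots> = 2*q / (1-q)" using q by simp
  finally have "sqrt (2*q / (1-q)\<^sup>2) \<le> 2*q / (1-q)" .
  hence "1/8 * sqrt (2*q / (1-q)\<^sup>2) * ln (1/\<epsilon>) \<le> 1/8 * (2*q / (1-q)) * (4 * t * ((1-q)/q))"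
    using log_bound True \<epsilon> q by (intro mult_mono) auto
  also have "\<dots> = t" using q q_pos by (simp add: field_simps)
  finally show ?thesis .
qed

lemma dpm_rounds_lower_bound_hard:
  assumes c: "0 < c" and \<alpha>: "0 \<le> \<alpha>" and q: "1/2 \<le> q" "q < 1" and \<epsilon>: "0 < \<epsilon>"
    and reach: "smooth_dpm_reach 1 (\<lambda>_. hard_f c b) UNIV (hard_u c \<alpha>) t s"
    and x_output: "x \<in> dpm_outputs 1 s"
    and close: "(norm (x - l2_geom (1/q\<^sup>2) q))\<^sup>2 \<le> \<epsilon>"
  shows "1/8 * sqrt (2*q / (1-q)\<^sup>2) * ln (1/\<epsilon>) \<le> real t"
proof -
  interpret split_chain_instance 1 "\<lambda>_. hard_f c b" "hard_u c \<alpha>" c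
    by (rule split_chain_instance_hard[OF c \<alpha>])
  have "x \<in> l2_upto (2*t+1)"
    using smooth_dpm_outputs_within[OF reach] x_output by blast
  hence "q ^ (4*t) \<le> \<epsilon>"
    using power2_norm_diff_geom_ge[of q x t] q close by simp
  thus ?thesis by (rule rounds_lower_bound[OF q \<epsilon>])
qed

theorem theorem5p3:
  "\<exists>c>0. \<forall>(Lf::real) (\<alpha>::real) (\<epsilon>::real). 0 < \<alpha> \<longrightarrow> 8 * \<alpha> < Lf \<longrightarrow> 0 < \<epsilon> \<longrightarrow>
     (\<exists>(m::nat) (f::nat \<Rightarrow> l2 \<Rightarrow> real) (P::l2 set) (rho::l2 \<Rightarrow> real)
        (u::l2 \<Rightarrow> real) (X::l2 set) (xs::l2).
        smooth_instance m f P rho u X \<and>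
        aggregate_smoothness m f P Lf \<and>
        strong_convexity_modulus X u \<alpha> \<and>
        is_optimal m f P rho u X xs \<and>
        (\<forall>t s x. smooth_dpm_reach m f X u t s \<longrightarrow> x \<in> dpm_outputs m s \<longrightarrow>
            (norm (x - xs))\<^sup>2 \<le> \<epsilon> \<longrightarrow>
            real t \<ge> c * sqrt (Lf / \<alpha>) * ln (1 / \<epsilon>)))"
proof (intro exI[of _ "1/8::real"] conjI allI impI)
  fix Lf \<alpha> \<epsilon> :: real
  assume \<alpha>: "0 < \<alpha>" and Lf: "8 * \<alpha> < Lf" and \<epsilon>: "0 < \<epsilon>"
  define c where "c = Lf / 2"
  have c: "0 < c" "2 * c = Lf" and "0 < \<alpha> / c" "\<alpha> / c < 1/4"
    using \<alpha> Lf by (auto simp: c_def field_simps)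
  then obtain q where q: "1/2 \<le> q" "q < 1" "(1-q)\<^sup>2 = \<alpha> / c * q"
    using exists_chain_ratio by blast
  hence ratio: "\<alpha> * q = c * (1-q)\<^sup>2" using c by (simp add: field_simps)
  have kappa: "Lf / \<alpha> = 2*q / (1-q)\<^sup>2" using ratio q \<alpha> c by (auto simp: field_simps)
  define b where "b = 1/q\<^sup>2 * (c*(1-q) + \<alpha>)"
  have "\<forall>t s x. smooth_dpm_reach 1 (\<lambda>_. hard_f c b) UNIV (hard_u c \<alpha>) t s \<longrightarrow>
      x \<in> dpm_outputs 1 s \<longrightarrow> (norm (x - l2_geom (1/q\<^sup>2) q))\<^sup>2 \<le> \<epsilon> \<longrightarrow>
      1/8 * sqrt (Lf / \<alpha>) * ln (1/\<epsilon>) \<le> real t"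
    unfolding kappa using dpm_rounds_lower_bound_hard[OF c(1) less_imp_le[OF \<alpha>] q(1,2) \<epsilon>] by blast
  moreover have "is_optimal 1 (\<lambda>_. hard_f c b) {l2_unit 0} (\<lambda>_. 0) (hard_u c \<alpha>) UNIV
      (l2_geom (1/q\<^sup>2) q)"
    unfolding b_def by (rule is_optimal_hard) (use c \<alpha> q ratio in auto)
  moreover note smooth_instance_hard[OF less_imp_le[OF c(1)] less_imp_le[OF \<alpha>], of b]
    aggregate_smoothness_hard[OF c(1), of b, unfolded c(2)]
    strong_convexity_modulus_hard_u[OF less_imp_le[OF c(1)] \<alpha>]
  ultimately show "\<exists>m (f::nat \<Rightarrow> l2 \<Rightarrow> real) P rho u X xs. smooth_instance m f P rho u X \<and>
        aggregate_smoothness m f P Lf \<and> strong_convexity_modulus X u \<alpha> \<and>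
        is_optimal m f P rho u X xs \<and>
        (\<forall>t s x. smooth_dpm_reach m f X u t s \<longrightarrow> x \<in> dpm_outputs m s \<longrightarrow>
            (norm (x - xs))\<^sup>2 \<le> \<epsilon> \<longrightarrow> 1/8 * sqrt (Lf / \<alpha>) * ln (1 / \<epsilon>) \<le> real t)"
    by blast
qed (simp)

end
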